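(* For any categorial sequential allocation mechanism $f_\mathcal O$, any assignment of each agent as optimistic or pessimistic, any agent $j$, and any profile: (1) if $j$ is optimistic, then the rank (in $R_j$) of the bundle allocated to $j$ is at most $n^p+1-\prod_{l=K_j}^{p}k_{j,\mathcal O_j(l)}$; (2) if $j$ is pessimistic, then the rank of the bundle allocated to $j$ is at most $n^p-\sum_{l=1}^{p}(k_{j,\mathcal O_j(l)}-1)$.
   Context: Basic categorized domain: $n$ agents, $p$ categories $D_i=\{1,\ldots,n\}$ of indivisible items, bundles $\mathfrak D=D_1\times\cdots\times D_p$; each agent $j$ has a linear order $R_j$ over $\mathfrak D$ (a profile is $(R_1,\ldots,R_n)$). $\mathrm{Rank}(R,\vec d)\in\{1,\ldots,n^p\}$ is the position of $\vec d$ in $R$ (top position has rank $1$). Categorial sequential allocation mechanism (CSAM) $f_\mathcal O$: given a linear order $\mathcal O$ over $\{1,\ldots,n\}\times\{1,\ldots,p\}$, in rounds $t=1,\ldots,np$, if the $t$-th element of $\mathcal O$ is $(j,i)$ then agent $j$ chooses an item $d_{j,i}$ from $D_{i,t}$, the set of items of $D_i$ not yet chosen at the start of round $t$; the choice is announced to all. Agent $j$ finally receives $(d_{j,1},\ldots,d_{j,p})$. Each agent is fixed in advance to be optimistic or pessimistic. When agent $j$ chooses from $D_i$ in round $t$, a bundle is available to her if for each category $l$ from which she has already chosen its $l$-th component equals her chosen item $d_{j,l}$, and for each other category $l$ its $l$-th component lies in $D_{l,t}$. An optimistic agent chooses the $i$-th component of her top-ranked available bundle. A pessimistic agent chooses the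 $d\in D_{i,t}$ for which her lowest-ranked available bundle with $i$-th component $d$ is highest in $R_j$. Notation: $\mathcal O_j$ is the order over categories in which agent $j$ chooses in $\mathcal O$ ($\mathcal O_j(l)$ is the $l$-th category she chooses from). $k_{j,i}$ is the number of items in $D_i$ still available right before $j$ chooses from $D_i$, i.e. $n$ minus the number of agents who choose from $D_i$ before $j$ in $\mathcal O$. $K_j$ is the smallest index $K\in\{1,\ldots,p\}$ such that for every $l$ with $K<l\leq p$, no agent chooses an item from category $\mathcal O_j(l)$ in any round strictly between the round of $(j,\mathcal O_j(K))$ and the round of $(j,\mathcal O_j(l))$. *)

theory Defs
  imports Main
begin

text \<open>Conventions (0-based): agents are 0..<n, categories are 0..<p, the items of every
category are 0..<n.  A linear order R over
bundles is a list enumerating every bundle exactly once, top first; Rank R b = position + 1.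
An order Ord (the paper's O) over agent/category pairs is a list enumerating {0..<n} x {0..<p} exactly once;
its t-th element (0-based) is the pick made in round t+1.\<close>

definition bundles :: "nat \<Rightarrow> nat \<Rightarrow> nat list set" where
  "bundles n p = {b. length b = p \<and> (\<forall>i<p. b ! i < n)}"

definition is_linear_order :: "nat \<Rightarrow> nat \<Rightarrow> nat list list \<Rightarrow> bool" where
  "is_linear_order n p R \<longleftrightarrow> distinct R \<and> set R = bundles n p"

definition pos :: "'a list \<Rightarrow> 'a \<Rightarrow> nat" where
  "pos xs x = (LEAST t. t < length xs \<and> xs ! t = x)"

definition Rank :: "nat list list \<Rightarrow> nat list \<Rightarrow> nat" where
  "Rank R b = pos R b + 1"

definition is_order :: "nat \<Rightarrow> nat \<Rightarrow> (nat \<times> nat) list \<Rightarrow> bool" where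
  "is_order n p Ord \<longleftrightarrow> distinct Ord \<and> set Ord = {0..<n} \<times> {0..<p}"

text \<open>A state records, for each agent a and category i, the item chosen so far (if any).\<close>
type_synonym state = "nat \<Rightarrow> nat \<Rightarrow> nat option"

definition avail_items :: "nat \<Rightarrow> state \<Rightarrow> nat \<Rightarrow> nat set" where
  "avail_items n s i = {d. d < n \<and> (\<forall>a. s a i \<noteq> Some d)}"

definition avail_bundles :: "nat \<Rightarrow> nat \<Rightarrow> state \<Rightarrow> nat \<Rightarrow> nat list set" where
  "avail_bundles n p s j = {b \<in> bundles n p. \<forall>l<p.
      (case s j l of Some d \<Rightarrow> b ! l = d | None \<Rightarrow> b ! l \<in> avail_items n s l)}"

definition opt_choice :: "nat \<Rightarrow> nat \<Rightarrow> nat list list \<Rightarrow> state \<Rightarrow> nat \<Rightarrow> nat \<Rightarrow> nat" where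
  "opt_choice n p R s j i = hd (filter (\<lambda>b. b \<in> avail_bundles n p s j) R) ! i"

definition worst_with :: "nat \<Rightarrow> nat \<Rightarrow> nat list list \<Rightarrow> state \<Rightarrow> nat \<Rightarrow> nat \<Rightarrow> nat \<Rightarrow> nat list" where
  "worst_with n p R s j i d = last (filter (\<lambda>b. b \<in> avail_bundles n p s j \<and> b ! i = d) R)"

definition pess_choice :: "nat \<Rightarrow> nat \<Rightarrow> nat list list \<Rightarrow> state \<Rightarrow> nat \<Rightarrow> nat \<Rightarrow> nat" where
  "pess_choice n p R s j i =
     (ARG_MIN (\<lambda>d. Rank R (worst_with n p R s j i d)) d. d \<in> avail_items n s i)"

definition choice :: "nat \<Rightarrow> nat \<Rightarrow> (nat \<Rightarrow> nat list list) \<Rightarrow> (nat \<Rightarrow> bool) \<Rightarrow> state \<Rightarrow> nat \<Rightarrow> nat \<Rightarrow> nat" where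
  "choice n p R optimistic s j i =
     (if optimistic j then opt_choice n p (R j) s j i else pess_choice n p (R j) s j i)"

fun run :: "nat \<Rightarrow> nat \<Rightarrow> (nat \<Rightarrow> nat list list) \<Rightarrow> (nat \<Rightarrow> bool) \<Rightarrow> (nat \<times> nat) list \<Rightarrow> state \<Rightarrow> state" where
  "run n p R optimistic [] s = s"
| "run n p R optimistic ((j, i) # os) s =
     run n p R optimistic os (s(j := (s j)(i := Some (choice n p R optimistic s j i))))"

definition CSAM :: "nat \<Rightarrow> nat \<Rightarrow> (nat \<times> nat) list \<Rightarrow> (nat \<Rightarrow> bool) \<Rightarrow> (nat \<Rightarrow> nat list list) \<Rightarrow> nat \<Rightarrow> nat list" where
  "CSAM n p Ord optimistic R j =
     (let s = run n p R optimistic Ord (\<lambda>_ _. None) in map (\<lambda>l. the (s j l)) [0..<p])"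

text \<open>O_j as a list: O_j(l) (1-based, as in the paper) is (Oj Ord j) ! (l - 1).\<close>
definition Oj :: "(nat \<times> nat) list \<Rightarrow> nat \<Rightarrow> nat list" where
  "Oj Ord j = map snd (filter (\<lambda>x. fst x = j) Ord)"

definition kk :: "nat \<Rightarrow> (nat \<times> nat) list \<Rightarrow> nat \<Rightarrow> nat \<Rightarrow> nat" where
  "kk n Ord j i = n - card {a. (a, i) \<in> set Ord \<and> pos Ord (a, i) < pos Ord (j, i)}"

text \<open>K_j (1-based index into O_j).\<close>
definition KK :: "nat \<Rightarrow> (nat \<times> nat) list \<Rightarrow> nat \<Rightarrow> nat" where
  "KK p Ord j = (LEAST K. 1 \<le> K \<and> K \<le> p \<and>
     (\<forall>l. K < l \<and> l \<le> p \<longrightarrow>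
        \<not> (\<exists>t. pos Ord (j, Oj Ord j ! (K - 1)) < t \<and> t < pos Ord (j, Oj Ord j ! (l - 1)) \<and>
               snd (Ord ! t) = Oj Ord j ! (l - 1))))"

end

theory Submission
  imports Defs
begin

(* At every round the bundles still available to agent j form a product of one item set per
   category; this set only shrinks, and when j picks item d from category i it is cut down to the
   slice of bundles with i-th component d.

   Pessimistic j: the worst bundles of the k_{j,i} slices are pairwise distinct and none is ranked
   below the worst available bundle, so taking the slice whose worst bundle is best raises the rank
   of the worst available bundle by at least k_{j,i} - 1.  Starting from rank n^p, after all p picks
   the only available bundle, which j receives, has rank at most n^p - sum (k_{j,i} - 1).

   Optimistic j: by the choice of K_j, once j has picked from O_j(K_j) no other agent picks from a
   category that j has yet to pick from.  Hence j's top available bundle at that round remains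
   available, j keeps choosing its components, and receives it.  Among the available bundles it is
   ranked first, and there are at least prod_{l >= K_j} k_{j,O_j(l)} of them. *)

lemma pos_nth: "distinct xs \<Longrightarrow> i < length xs \<Longrightarrow> pos xs (xs ! i) = i"
  unfolding pos_def by (rule Least_equality) (auto simp: nth_eq_iff_index_eq)

lemma
  assumes "x \<in> set xs"
  shows pos_less_length: "pos xs x < length xs" and nth_pos: "xs ! pos xs x = x"
proof -
  obtain i where "i < length xs" "xs ! i = x"
    using assms by (auto simp: in_set_conv_nth)
  then have "pos xs x < length xs \<and> xs ! pos xs x = x"
    unfolding pos_def by (metis (mono_tags, lifting) LeastI)
  then show "pos xs x < length xs" "xs ! pos xs x = x" by auto
qed

lemma pos_eq_iff: "x \<in> set xs \<Longrightarrow> y \<in> set xs \<Longrightarrow> pos xs x = pos xs y \<longleftrightarrow> x = y"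
  by (metis nth_pos)

lemma pos_Cons: "x \<in> set (a # xs) \<Longrightarrow> pos (a # xs) x = (if x = a then 0 else Suc (pos xs x))"
proof (cases "x = a")
  case False
  assume "x \<in> set (a # xs)"
  then obtain i where "i < length xs" "xs ! i = x"
    using False by (auto simp: in_set_conv_nth)
  then have "pos (a # xs) x = Suc (LEAST m. Suc m < length (a # xs) \<and> (a # xs) ! Suc m = x)"
    unfolding pos_def by (intro Least_Suc[where n = "Suc i"]) (use False in auto)
  then show ?thesis
    using False by (simp add: pos_def)
qed (simp add: pos_def)

lemma hd_filter_mem:
  "x \<in> set xs \<Longrightarrow> P x \<Longrightarrow> hd (filter P xs) \<in> set xs \<and> P (hd (filter P xs))"
  using hd_in_set[of "filter P xs"] by (auto simp: filter_empty_conv)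

lemma last_filter_mem:
  "x \<in> set xs \<Longrightarrow> P x \<Longrightarrow> last (filter P xs) \<in> set xs \<and> P (last (filter P xs))"
  using last_in_set[of "filter P xs"] by (auto simp: filter_empty_conv)

lemma hd_filter_mono:
  assumes "\<And>x. Q x \<Longrightarrow> P x" and "Q (hd (filter P xs))" and "filter P xs \<noteq> []"
  shows "hd (filter Q xs) = hd (filter P xs)"
  using assms(2,3) by (induction xs) (auto dest: assms(1))

lemma pos_hd_filter_plus_length_le:
  "x \<in> set xs \<Longrightarrow> P x \<Longrightarrow> pos xs (hd (filter P xs)) + length (filter P xs) \<le> length xs"
proof (induction xs)
  case (Cons a xs)
  show ?case
  proof (cases "P a")
    case False
    with Cons.prems have "x \<in> set xs" by auto
    with Cons.prems False show ?thesis
      using Cons.IH hd_filter_mem[of x xs P] by (auto simp: pos_Cons)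
  qed (simp add: pos_Cons length_filter_le)
qed simp

lemma pos_le_last_filter:
  "distinct xs \<Longrightarrow> x \<in> set xs \<Longrightarrow> P x \<Longrightarrow> pos xs x \<le> pos xs (last (filter P xs))"
proof (induction xs)
  case (Cons a xs)
  show ?case
  proof (cases "filter P xs = []")
    case True
    with Cons.prems have "x = a" by (auto simp: filter_empty_conv)
    with True Cons.prems show ?thesis by (simp add: pos_Cons)
  next
    case False
    then have "last (filter P xs) \<in> set xs" using last_in_set by fastforce
    with Cons False show ?thesis by (auto simp: pos_Cons)
  qed
qed simp

definition prod_lists :: "nat \<Rightarrow> (nat \<Rightarrow> 'a set) \<Rightarrow> 'a list set" where
  "prod_lists p S = {b. length b = p \<and> (\<forall>l<p. b ! l \<in> S l)}"

lemma prod_lists_Suc: "prod_lists (Suc p) S = (\<lambda>(xs, x). xs @ [x]) ` (prod_lists p S \<times> S p)"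
proof (intro equalityI subsetI)
  fix b assume b: "b \<in> prod_lists (Suc p) S"
  then have "length b = Suc p" by (simp add: prod_lists_def)
  then have "b = take p b @ [b ! p]"
    by (metis lessI take_Suc_conv_app_nth take_all order_refl)
  moreover have "take p b \<in> prod_lists p S" "b ! p \<in> S p"
    using b by (auto simp: prod_lists_def)
  ultimately show "b \<in> (\<lambda>(xs, x). xs @ [x]) ` (prod_lists p S \<times> S p)"
    by (intro rev_image_eqI[of "(take p b, b ! p)"]) auto
qed (auto simp: prod_lists_def nth_append less_Suc_eq)

lemma card_prod_lists: "card (prod_lists p S) = (\<Prod>l<p. card (S l))"
proof (induction p)
  case 0
  have "prod_lists 0 S = {[]}" by (auto simp: prod_lists_def)
  then show ?case by simp
next
  case (Suc p)
  have "inj_on (\<lambda>(xs, x). xs @ [x]) (prod_lists p S \<times> S p)"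
    by (auto simp: inj_on_def)
  then show ?case
    using Suc by (simp add: prod_lists_Suc card_image card_cartesian_product)
qed

lemma prod_lists_nonempty: "(\<And>l. l < p \<Longrightarrow> S l \<noteq> {}) \<Longrightarrow> prod_lists p S \<noteq> {}"
  using some_in_eq[of "S _"]
  by (auto simp: prod_lists_def intro!: exI[of _ "map (\<lambda>l. SOME x. x \<in> S l) [0..<p]"])

lemma prod_lists_mono: "(\<And>l. l < p \<Longrightarrow> S l \<subseteq> T l) \<Longrightarrow> prod_lists p S \<subseteq> prod_lists p T"
  by (auto simp: prod_lists_def)

lemma card_bundles: "card (bundles n p) = n ^ p"
proof -
  have "bundles n p = prod_lists p (\<lambda>_. {..<n})"
    by (auto simp: bundles_def prod_lists_def)
  then show ?thesis by (simp add: card_prod_lists)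
qed

lemma length_linear_order: "is_linear_order n p R \<Longrightarrow> length R = n ^ p"
  unfolding is_linear_order_def using card_bundles distinct_card by metis

definition worst_rank :: "nat list list \<Rightarrow> nat list set \<Rightarrow> nat" where
  "worst_rank R B = Rank R (last (filter (\<lambda>b. b \<in> B) R))"

lemma Rank_le_length: "x \<in> set R \<Longrightarrow> Rank R x \<le> length R"
  unfolding Rank_def using pos_less_length by (simp add: Suc_le_eq)

lemma Rank_le_worst_rank: "distinct R \<Longrightarrow> b \<in> set R \<Longrightarrow> b \<in> B \<Longrightarrow> Rank R b \<le> worst_rank R B"
  unfolding worst_rank_def Rank_def using pos_le_last_filter[of R b "\<lambda>b. b \<in> B"] by simp

lemma worst_rank_mono:
  assumes "distinct R" "B' \<subseteq> B" "b \<in> B'" "b \<in> set R"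
  shows "worst_rank R B' \<le> worst_rank R B"
  using last_filter_mem[of b R "\<lambda>b. b \<in> B'", OF assms(4,3)] assms(1,2)
  by (auto simp: worst_rank_def[of R B'] intro!: Rank_le_worst_rank)

lemma worst_rank_le_length: "b \<in> set R \<Longrightarrow> b \<in> B \<Longrightarrow> worst_rank R B \<le> length R"
  unfolding worst_rank_def using last_filter_mem[of b R "\<lambda>b. b \<in> B"] Rank_le_length by blast

(* The worst bundles of the slices are distinct and ranked between the worst bundle of the
   chosen slice and the worst bundle of B. *)
lemma worst_rank_arg_min_slice:
  assumes R: "distinct R" "B \<subseteq> set R" and "D \<noteq> {}" and slices: "\<And>d. d \<in> D \<Longrightarrow> \<exists>b\<in>B. b ! i = d"
  defines "g \<equiv> \<lambda>d. worst_rank R {b \<in> B. b ! i = d}"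
  shows "g (ARG_MIN g d. d \<in> D) + (card D - 1) \<le> worst_rank R B"
proof -
  define d\<^sub>0 where "d\<^sub>0 = (ARG_MIN g d. d \<in> D)"
  obtain d where "d \<in> D" using \<open>D \<noteq> {}\<close> by blast
  then have d\<^sub>0: "d\<^sub>0 \<in> D" "\<And>d. d \<in> D \<Longrightarrow> g d\<^sub>0 \<le> g d"
    using arg_min_nat_lemma[of "\<lambda>d. d \<in> D" d g] unfolding d\<^sub>0_def by blast+
  define w where "w d = last (filter (\<lambda>b. b \<in> B \<and> b ! i = d) R)" for d
  have w: "w d \<in> set R" "w d \<in> B" "w d ! i = d" if d: "d \<in> D" for d
  proof -
    obtain b where "b \<in> B" "b ! i = d" using slices[OF d] by blast
    then show "w d \<in> set R" "w d \<in> B" "w d ! i = d"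
      using R(2) last_filter_mem[of b R "\<lambda>b. b \<in> B \<and> b ! i = d"] unfolding w_def by auto
  qed
  have g_w: "g d = Rank R (w d)" for d
    by (simp add: g_def w_def worst_rank_def)
  have g_le: "g d \<le> worst_rank R B" if "d \<in> D" for d
    unfolding g_w using Rank_le_worst_rank[OF R(1) w(1,2)[OF that]] .
  have "inj_on g D"
  proof (rule inj_onI)
    fix d d' assume d: "d \<in> D" and d': "d' \<in> D" and "g d = g d'"
    then have "Rank R (w d) = Rank R (w d')" by (simp only: g_w)
    then have "w d = w d'"
      using pos_eq_iff[OF w(1)[OF d] w(1)[OF d']] by (simp add: Rank_def)
    then show "d = d'"
      using w(3)[OF d] w(3)[OF d'] by metis
  qed
  then have "card D = card (g ` D)" by (simp add: card_image)
  also have "\<dots> \<le> card {g d\<^sub>0..worst_rank R B}"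
    by (rule card_mono) (auto intro: d\<^sub>0(2) g_le)
  finally show ?thesis
    using g_le[OF d\<^sub>0(1)] unfolding d\<^sub>0_def by simp
qed

lemma Rank_hd_filter_plus_card:
  assumes "distinct R" "B \<subseteq> set R" "b \<in> B"
  shows "Rank R (hd (filter (\<lambda>b. b \<in> B) R)) + card B \<le> length R + 1"
proof -
  have "B \<inter> set R = B" using assms(2) by blast
  then have "length (filter (\<lambda>b. b \<in> B) R) = card B"
    using distinct_length_filter[OF assms(1), of "\<lambda>b. b \<in> B"] by simp
  moreover have "b \<in> set R" using assms(2,3) by blast
  ultimately show ?thesis
    using pos_hd_filter_plus_length_le[of b R "\<lambda>b. b \<in> B"] assms(3) by (simp add: Rank_def)
qed

definition assign :: "state \<Rightarrow> nat \<Rightarrow> nat \<Rightarrow> nat \<Rightarrow> state" where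
  "assign s a i d = s(a := (s a)(i := Some d))"

lemma assign_apply: "assign s a i d a' l = (if a' = a \<and> l = i then Some d else s a' l)"
  by (simp add: assign_def)

lemma run_append: "run n p R opt (xs @ ys) s = run n p R opt ys (run n p R opt xs s)"
proof (induction n p R opt xs s rule: run.induct)
  case (2 n p R opt a i os s)
  show ?case by (simp only: append_Cons run.simps) (rule 2)
qed simp

lemma run_snoc:
  "run n p R opt (xs @ [(a, i)]) s = assign (run n p R opt xs s) a i (choice n p R opt (run n p R opt xs s) a i)"
  by (simp add: run_append assign_def)

lemma avail_items_assign_other: "l \<noteq> i \<Longrightarrow> avail_items n (assign s a i d) l = avail_items n s l"
  by (simp add: avail_items_def assign_apply)

definition consistent :: "nat \<Rightarrow> state \<Rightarrow> (nat \<times> nat) set \<Rightarrow> bool" where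
  "consistent n s P \<longleftrightarrow> (\<forall>a l. s a l \<noteq> None \<longleftrightarrow> (a, l) \<in> P) \<and> (\<forall>a l d. s a l = Some d \<longrightarrow> d < n)
     \<and> (\<forall>a a' l d. s a l = Some d \<longrightarrow> s a' l = Some d \<longrightarrow> a = a')"

lemma consistent_empty: "consistent n (\<lambda>_ _. None) {}"
  by (simp add: consistent_def)

lemma consistent_assign:
  assumes "consistent n s P" "d \<in> avail_items n s i" "(a, i) \<notin> P"
  shows "consistent n (assign s a i d) (insert (a, i) P)"
proof -
  have "s a i = None"
    using assms(1,3) unfolding consistent_def by blast
  moreover have "\<And>a'. s a' i \<noteq> Some d" "d < n"
    using assms(2) by (auto simp: avail_items_def)
  ultimately
  show ?thesis
    using assms(1) unfolding consistent_def assign_apply by (auto split: if_splits)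
qed

lemma avail_items_eq: "avail_items n s l = {..<n} - {d. \<exists>a. s a l = Some d}"
  by (auto simp: avail_items_def)

lemma finite_avail_items: "finite (avail_items n s l)"
  by (simp add: avail_items_eq)

lemma card_assigned_items:
  assumes "consistent n s P"
  shows "card {d. \<exists>a. s a l = Some d} = card {a. (a, l) \<in> P}"
proof -
  have P: "{a. (a, l) \<in> P} = {a. s a l \<noteq> None}"
    using assms by (simp add: consistent_def)
  have "inj_on (\<lambda>a. the (s a l)) {a. s a l \<noteq> None}"
  proof (rule inj_onI)
    fix x y assume "x \<in> {a. s a l \<noteq> None}" "y \<in> {a. s a l \<noteq> None}" "the (s x l) = the (s y l)"
    then obtain e where "s x l = Some e" "s y l = Some e" by auto
    with assms show "x = y" by (auto simp: consistent_def)
  qed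
  moreover have "(\<lambda>a. the (s a l)) ` {a. s a l \<noteq> None} = {d. \<exists>a. s a l = Some d}"
    by (auto simp: image_iff) (metis option.sel)
  ultimately show ?thesis unfolding P by (metis card_image)
qed

lemma card_avail_items:
  assumes "consistent n s P"
  shows "card (avail_items n s l) = n - card {a. (a, l) \<in> P}"
proof -
  have "{d. \<exists>a. s a l = Some d} \<subseteq> {..<n}"
    using assms by (auto simp: consistent_def)
  then show ?thesis
    unfolding avail_items_eq card_assigned_items[OF assms, symmetric]
    by (simp add: card_Diff_subset finite_subset)
qed

lemma avail_items_nonempty:
  assumes "consistent n s P" "P \<subseteq> {..<n} \<times> UNIV" "a < n" "(a, l) \<notin> P"
  shows "avail_items n s l \<noteq> {}"
proof -
  have "{a'. (a', l) \<in> P} \<subseteq> {..<n} - {a}"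
    using assms(2,4) by auto
  then have "card {a'. (a', l) \<in> P} \<le> n - 1"
    using card_mono[of "{..<n} - {a}"] assms(3) by fastforce
  then have "card (avail_items n s l) > 0"
    using card_avail_items[OF assms(1)] assms(3) by simp
  then show ?thesis by auto
qed

definition avail_entries :: "nat \<Rightarrow> state \<Rightarrow> nat \<Rightarrow> nat \<Rightarrow> nat set" where
  "avail_entries n s a l = (case s a l of Some d \<Rightarrow> {d} | None \<Rightarrow> avail_items n s l)"

lemma mem_avail_bundles_iff:
  "b \<in> avail_bundles n p s a \<longleftrightarrow> b \<in> bundles n p \<and> (\<forall>l<p. b ! l \<in> avail_entries n s a l)"
  unfolding avail_bundles_def avail_entries_def by (auto split: option.splits)

lemma avail_bundles_eq_prod_lists:
  "(\<And>l d. s a l = Some d \<Longrightarrow> d < n) \<Longrightarrow> avail_bundles n p s a = prod_lists p (avail_entries n s a)"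
  unfolding avail_bundles_def prod_lists_def bundles_def avail_entries_def
  by (auto simp: avail_items_def split: option.splits)

lemma avail_entries_nonempty:
  assumes "consistent n s P" "P \<subseteq> {..<n} \<times> UNIV" "a < n"
  shows "avail_entries n s a l \<noteq> {}"
proof (cases "s a l")
  case None
  with assms(1) have "(a, l) \<notin> P"
    unfolding consistent_def by blast
  then show ?thesis
    using None avail_items_nonempty[OF assms] by (simp add: avail_entries_def)
qed (simp add: avail_entries_def)

lemma avail_bundles_nonempty:
  "consistent n s P \<Longrightarrow> P \<subseteq> {..<n} \<times> UNIV \<Longrightarrow> a < n \<Longrightarrow> avail_bundles n p s a \<noteq> {}"
  using avail_bundles_eq_prod_lists[of s a n p] prod_lists_nonempty avail_entries_nonempty
  by (metis consistent_def)

lemma avail_bundles_subset_bundles: "avail_bundles n p s a \<subseteq> bundles n p"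
  by (auto simp: avail_bundles_def)

lemma avail_items_assign_subset:
  assumes "s a i = None"
  shows "avail_items n (assign s a i d) l \<subseteq> avail_items n s l"
proof
  fix x assume x: "x \<in> avail_items n (assign s a i d) l"
  have assigned: "assign s a i d a' l \<noteq> Some x" for a'
    using x by (simp add: avail_items_def)
  have "s a' l \<noteq> Some x" for a'
    using assigned[of a'] assms by (cases "a' = a \<and> l = i") (simp_all add: assign_apply)
  with x show "x \<in> avail_items n s l" by (simp add: avail_items_def)
qed

lemma avail_entries_assign_subset:
  assumes "s a i = None" "d \<in> avail_items n s i"
  shows "avail_entries n (assign s a i d) j l \<subseteq> avail_entries n s j l"
  using assms avail_items_assign_subset[where s = s and a = a and i = i and n = n and d = d and l = l]
  by (cases "s j l") (auto simp: avail_entries_def assign_apply)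

lemma avail_entries_assign_self:
  "s j i = None \<Longrightarrow> avail_entries n (assign s j i d) j l = (if l = i then {d} else avail_entries n s j l)"
  by (cases "l = i") (simp_all add: avail_entries_def assign_apply avail_items_assign_other split: option.split)

lemma avail_entries_assign_other:
  "a \<noteq> j \<Longrightarrow> s j i \<noteq> None \<Longrightarrow> avail_entries n (assign s a i d) j l = avail_entries n s j l"
  by (cases "l = i") (auto simp: avail_entries_def assign_apply avail_items_assign_other split: option.split)

lemma avail_bundles_assign_subset:
  assumes "s a i = None" "d \<in> avail_items n s i"
  shows "avail_bundles n p (assign s a i d) j \<subseteq> avail_bundles n p s j"
proof
  fix b assume "b \<in> avail_bundles n p (assign s a i d) j"
  then show "b \<in> avail_bundles n p s j"
    using avail_entries_assign_subset[OF assms] unfolding mem_avail_bundles_iff by blast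
qed

lemma avail_bundles_assign_self:
  assumes "s j i = None" "i < p" "d \<in> avail_items n s i"
  shows "avail_bundles n p (assign s j i d) j = {b \<in> avail_bundles n p s j. b ! i = d}"
proof -
  let ?E = "avail_entries n s j"
  have Ei: "?E i = avail_items n s i"
    using assms(1) by (simp add: avail_entries_def)
  have "(\<forall>l<p. b ! l \<in> (if l = i then {d} else ?E l)) \<longleftrightarrow> (\<forall>l<p. b ! l \<in> ?E l) \<and> b ! i = d" for b
  proof
    assume h: "\<forall>l<p. b ! l \<in> (if l = i then {d} else ?E l)"
    then have bi: "b ! i = d" using assms(2) by auto
    show "(\<forall>l<p. b ! l \<in> ?E l) \<and> b ! i = d"
    proof (intro conjI allI impI bi)
      fix l assume "l < p"
      then show "b ! l \<in> ?E l" using h bi Ei assms(3) by (cases "l = i") auto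
    qed
  qed auto
  then show ?thesis
    using assms(1) by (auto simp: mem_avail_bundles_iff avail_entries_assign_self)
qed

lemma avail_bundles_assign_other:
  "a \<noteq> j \<Longrightarrow> s j i \<noteq> None \<Longrightarrow> avail_bundles n p (assign s a i d) j = avail_bundles n p s j"
  by (simp add: mem_avail_bundles_iff avail_entries_assign_other set_eq_iff)

lemma avail_bundles_all_assigned:
  assumes "\<And>l. l < p \<Longrightarrow> \<exists>d<n. s j l = Some d"
  shows "avail_bundles n p s j = {map (\<lambda>l. the (s j l)) [0..<p]}"
proof -
  have "avail_entries n s j l = {the (s j l)}" if "l < p" for l
    using assms[OF that] by (auto simp: avail_entries_def)
  moreover have "the (s j l) < n" if "l < p" for l
    using assms[OF that] by auto
  then have "map (\<lambda>l. the (s j l)) [0..<p] \<in> bundles n p"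
    by (simp add: bundles_def)
  ultimately show ?thesis
    by (auto simp: mem_avail_bundles_iff bundles_def intro: nth_equalityI)
qed

lemma choice_mem_avail_items:
  assumes "set (R a) = bundles n p" "i < p" "s a i = None" "avail_bundles n p s a \<noteq> {}"
  shows "choice n p R opt s a i \<in> avail_items n s i"
proof -
  obtain b where b: "b \<in> avail_bundles n p s a" using assms(4) by blast
  have entry: "b' ! i \<in> avail_items n s i" if "b' \<in> avail_bundles n p s a" for b'
    using that assms(2,3) by (auto simp: avail_bundles_def)
  have "b \<in> set (R a)"
    using b assms(1) avail_bundles_subset_bundles by blast
  then have "opt_choice n p (R a) s a i \<in> avail_items n s i"
    using hd_filter_mem[of b "R a" "\<lambda>b. b \<in> avail_bundles n p s a"] b entry
    by (simp add: opt_choice_def)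
  moreover have "pess_choice n p (R a) s a i \<in> avail_items n s i"
    unfolding pess_choice_def by (rule arg_min_nat_lemma[THEN conjunct1]) (rule entry[OF b])
  ultimately show ?thesis by (simp add: choice_def)
qed

lemma pess_choice_eq_arg_min:
  "pess_choice n p R s j i
     = (ARG_MIN (\<lambda>d. worst_rank R {b \<in> avail_bundles n p s j. b ! i = d}) d. d \<in> avail_items n s i)"
  by (simp add: pess_choice_def worst_with_def worst_rank_def)

locale csam =
  fixes n p :: nat and Ord :: "(nat \<times> nat) list" and optimistic :: "nat \<Rightarrow> bool"
    and R :: "nat \<Rightarrow> nat list list" and j :: nat
  assumes p_pos: "1 \<le> p"
    and order: "is_order n p Ord"
    and linear: "\<forall>a<n. is_linear_order n p (R a)"
    and agent: "j < n"
begin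

lemma distinct_Ord: "distinct Ord" and set_Ord: "set Ord = {0..<n} \<times> {0..<p}"
  using order by (auto simp: is_order_def)

lemma set_R: "a < n \<Longrightarrow> set (R a) = bundles n p"
  using linear by (simp add: is_linear_order_def)

lemma distinct_R: "distinct (R j)"
  using linear agent by (simp add: is_linear_order_def)

lemma length_R: "length (R j) = n ^ p"
  using linear agent length_linear_order by simp

lemma mem_set_take_Ord: "x \<in> set (take t Ord) \<longleftrightarrow> x \<in> set Ord \<and> pos Ord x < t"
proof
  assume "x \<in> set (take t Ord)"
  then obtain i where "i < t" "i < length Ord" "Ord ! i = x"
    by (auto simp: in_set_conv_nth)
  then show "x \<in> set Ord \<and> pos Ord x < t"
    using pos_nth[OF distinct_Ord] by auto
next
  assume "x \<in> set Ord \<and> pos Ord x < t"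
  then show "x \<in> set (take t Ord)"
    using pos_less_length[of x Ord] nth_pos[of x Ord]
    by (metis in_set_conv_nth length_take min_less_iff_conj nth_take)
qed

lemma set_take_Suc_Ord: "t < length Ord \<Longrightarrow> set (take (Suc t) Ord) = insert (Ord ! t) (set (take t Ord))"
  by (simp add: take_Suc_conv_app_nth)

lemma nth_Ord_notin_set_take: "t < length Ord \<Longrightarrow> Ord ! t \<notin> set (take t Ord)"
  by (simp add: mem_set_take_Ord pos_nth[OF distinct_Ord])

lemma nth_Ord_less:
  assumes "t < length Ord" "Ord ! t = (a, i)"
  shows "a < n" "i < p"
  using nth_mem[OF assms(1)] assms(2) set_Ord by auto

lemma set_take_Ord_subset: "set (take t Ord) \<subseteq> {..<n} \<times> UNIV"
  using set_take_subset[of t Ord] set_Ord by auto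

definition round_state :: "nat \<Rightarrow> state" where
  "round_state t = run n p R optimistic (take t Ord) (\<lambda>_ _. None)"

lemma round_state_Suc:
  "t < length Ord \<Longrightarrow> Ord ! t = (a, i)
    \<Longrightarrow> round_state (Suc t) = assign (round_state t) a i (choice n p R optimistic (round_state t) a i)"
  by (simp add: round_state_def take_Suc_conv_app_nth run_snoc)

context
  fixes t a i
  assumes round: "t < length Ord" "Ord ! t = (a, i)"
    and consistent: "consistent n (round_state t) (set (take t Ord))"
begin

lemma unassigned_if_consistent: "round_state t a i = None"
  using consistent nth_Ord_notin_set_take[OF round(1), unfolded round(2)]
  unfolding consistent_def by blast

lemma choice_avail_if_consistent:
  "choice n p R optimistic (round_state t) a i \<in> avail_items n (round_state t) i"
  using choice_mem_avail_items[where s = "round_state t" and R = R and a = a,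
      OF set_R[OF nth_Ord_less(1)[OF round]] nth_Ord_less(2)[OF round] unassigned_if_consistent]
    avail_bundles_nonempty[OF consistent set_take_Ord_subset nth_Ord_less(1)[OF round]]
  by blast

end

lemma consistent_round_state: "t \<le> length Ord \<Longrightarrow> consistent n (round_state t) (set (take t Ord))"
proof (induction t)
  case 0
  then show ?case by (simp add: round_state_def consistent_empty)
next
  case (Suc t)
  obtain a i where ai: "Ord ! t = (a, i)" by fastforce
  have t: "t < length Ord" using Suc.prems by simp
  have IH: "consistent n (round_state t) (set (take t Ord))"
    using Suc by simp
  have fresh: "(a, i) \<notin> set (take t Ord)"
    using nth_Ord_notin_set_take[OF t] ai by simp
  show ?case
    using consistent_assign[OF IH choice_avail_if_consistent[OF t ai IH] fresh]
    by (simp add: round_state_Suc[OF t ai] set_take_Suc_Ord[OF t] ai)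
qed

lemma unassigned_at_round: "t < length Ord \<Longrightarrow> Ord ! t = (a, i) \<Longrightarrow> round_state t a i = None"
  using unassigned_if_consistent consistent_round_state by simp

lemma choice_avail_at_round:
  "t < length Ord \<Longrightarrow> Ord ! t = (a, i)
    \<Longrightarrow> choice n p R optimistic (round_state t) a i \<in> avail_items n (round_state t) i"
  using choice_avail_if_consistent consistent_round_state by simp

definition round_of :: "nat \<Rightarrow> nat" where
  "round_of c = pos Ord (j, c)"

lemma
  assumes "c < p"
  shows round_of_less: "round_of c < length Ord" and nth_round_of: "Ord ! round_of c = (j, c)"
proof -
  have "(j, c) \<in> set Ord" using assms agent set_Ord by simp
  then show "round_of c < length Ord" "Ord ! round_of c = (j, c)"
    unfolding round_of_def by (simp_all add: pos_less_length nth_pos)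
qed

lemma round_of_eqI: "t < length Ord \<Longrightarrow> Ord ! t = (j, c) \<Longrightarrow> round_of c = t"
  unfolding round_of_def by (metis pos_nth[OF distinct_Ord])

lemma assigned_iff_round_of_less:
  "t \<le> length Ord \<Longrightarrow> c < p \<Longrightarrow> round_state t j c \<noteq> None \<longleftrightarrow> round_of c < t"
  using consistent_round_state agent set_Ord
  by (simp add: consistent_def mem_set_take_Ord round_of_def)

definition avail :: "nat \<Rightarrow> nat list set" where
  "avail t = avail_bundles n p (round_state t) j"

lemma avail_subset_R: "avail t \<subseteq> set (R j)"
  using avail_bundles_subset_bundles set_R[OF agent] by (simp add: avail_def)

lemma avail_eq_prod_lists: "t \<le> length Ord \<Longrightarrow> avail t = prod_lists p (avail_entries n (round_state t) j)"
  using consistent_round_state unfolding avail_def consistent_def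
  by (intro avail_bundles_eq_prod_lists) blast

lemma avail_nonempty: "t \<le> length Ord \<Longrightarrow> avail t \<noteq> {}"
  unfolding avail_def using avail_bundles_nonempty[OF consistent_round_state set_take_Ord_subset agent] .

lemma avail_Suc_subset:
  assumes "t < length Ord"
  shows "avail (Suc t) \<subseteq> avail t"
proof -
  obtain a i where ai: "Ord ! t = (a, i)" by fastforce
  show ?thesis
    unfolding avail_def round_state_Suc[OF assms ai]
    using avail_bundles_assign_subset[OF unassigned_at_round choice_avail_at_round] assms ai by blast
qed

lemma avail_antimono: "t \<le> t' \<Longrightarrow> t' \<le> length Ord \<Longrightarrow> avail t' \<subseteq> avail t"
proof (induction t' rule: dec_induct)
  case (step m)
  then show ?case using avail_Suc_subset[of m] by simp
qed simp

lemma avail_Suc_own: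
  assumes "t < length Ord" "Ord ! t = (j, i)"
  shows "avail (Suc t) = {b \<in> avail t. b ! i = choice n p R optimistic (round_state t) j i}"
proof -
  show ?thesis
    using nth_Ord_less(2)[OF assms]
    unfolding avail_def round_state_Suc[OF assms]
    using avail_bundles_assign_self unassigned_at_round[OF assms] choice_avail_at_round[OF assms] by blast
qed

lemma avail_Suc_other:
  "t < length Ord \<Longrightarrow> Ord ! t = (a, i) \<Longrightarrow> a \<noteq> j \<Longrightarrow> round_state t j i \<noteq> None \<Longrightarrow> avail (Suc t) = avail t"
  unfolding avail_def by (simp add: round_state_Suc avail_bundles_assign_other)

lemma avail_final: "avail (length Ord) = {CSAM n p Ord optimistic R j}"
proof -
  have "\<exists>d<n. round_state (length Ord) j l = Some d" if "l < p" for l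
    using assigned_iff_round_of_less[OF order_refl that] round_of_less[OF that]
      consistent_round_state[OF order_refl] unfolding consistent_def by blast
  moreover have "round_state (length Ord) = run n p R optimistic Ord (\<lambda>_ _. None)"
    by (simp add: round_state_def)
  ultimately show ?thesis
    unfolding avail_def CSAM_def Let_def by (simp add: avail_bundles_all_assigned)
qed

lemma kk_eq_card_avail_items:
  assumes "c < p"
  shows "kk n Ord j c = card (avail_items n (round_state (round_of c)) c)"
proof -
  have "{a. (a, c) \<in> set (take (round_of c) Ord)} = {a. (a, c) \<in> set Ord \<and> pos Ord (a, c) < pos Ord (j, c)}"
    unfolding round_of_def mem_set_take_Ord ..
  then show ?thesis
    unfolding kk_def
    using card_avail_items[OF consistent_round_state] round_of_less[OF assms] by simp
qed

lemma kk_pos: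
  assumes "c < p"
  shows "0 < kk n Ord j c"
proof -
  have "(j, c) \<notin> set (take (round_of c) Ord)"
    by (simp add: mem_set_take_Ord round_of_def)
  then have "avail_items n (round_state (round_of c)) c \<noteq> {}"
    using avail_items_nonempty[OF consistent_round_state set_take_Ord_subset agent] round_of_less[OF assms]
    by simp
  then show ?thesis
    by (simp add: kk_eq_card_avail_items[OF assms] card_gt_0_iff finite_avail_items)
qed

lemma avail_slice_nonempty:
  assumes "t \<le> length Ord" "round_state t j i = None" "i < p" "d \<in> avail_items n (round_state t) i"
  shows "\<exists>b\<in>avail t. b ! i = d"
proof -
  let ?E = "(avail_entries n (round_state t) j)(i := {d})"
  have "?E l \<noteq> {}" for l
    using avail_entries_nonempty[OF consistent_round_state set_take_Ord_subset agent] assms(1) by simp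
  then obtain b where b: "b \<in> prod_lists p ?E" using prod_lists_nonempty[of p ?E] by blast
  have "prod_lists p ?E \<subseteq> prod_lists p (avail_entries n (round_state t) j)"
    using assms(2,4) by (intro prod_lists_mono) (simp add: avail_entries_def)
  then have "b \<in> avail t"
    using b avail_eq_prod_lists[OF assms(1)] by auto
  moreover have "b ! i \<in> ?E i" using b assms(3) unfolding prod_lists_def by blast
  then have "b ! i = d" by simp
  ultimately show ?thesis by blast
qed

definition worst_avail :: "nat \<Rightarrow> nat" where
  "worst_avail t = worst_rank (R j) (avail t)"

lemma worst_avail_Suc_le: "t < length Ord \<Longrightarrow> worst_avail (Suc t) \<le> worst_avail t"
proof -
  assume t: "t < length Ord"
  obtain b where "b \<in> avail (Suc t)" using avail_nonempty[of "Suc t"] t by auto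
  then show ?thesis
    unfolding worst_avail_def
    using worst_rank_mono[OF distinct_R avail_Suc_subset[OF t]] avail_subset_R by blast
qed

lemma worst_avail_le: "t \<le> length Ord \<Longrightarrow> worst_avail t \<le> n ^ p"
proof -
  assume t: "t \<le> length Ord"
  obtain b where "b \<in> avail t" using avail_nonempty[OF t] by auto
  then show ?thesis
    unfolding worst_avail_def using worst_rank_le_length[of b "R j"] avail_subset_R length_R by auto
qed

lemma worst_avail_Suc_own:
  assumes "\<not> optimistic j" "t < length Ord" "Ord ! t = (j, i)"
  shows "worst_avail (Suc t) + (kk n Ord j i - 1) \<le> worst_avail t"
proof -
  let ?D = "avail_items n (round_state t) i"
  let ?g = "\<lambda>d. worst_rank (R j) {b \<in> avail t. b ! i = d}"
  have i: "i < p" using nth_Ord_less(2)[OF assms(2,3)] .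
  have unassigned: "round_state t j i = None" using unassigned_at_round[OF assms(2,3)] .
  have kk: "kk n Ord j i = card ?D"
    using kk_eq_card_avail_items[OF i] round_of_eqI[OF assms(2,3)] by simp
  have D: "?D \<noteq> {}" using choice_avail_at_round[OF assms(2,3)] by blast
  have slices: "\<exists>b\<in>avail t. b ! i = d" if "d \<in> ?D" for d
    using avail_slice_nonempty[OF less_imp_le[OF assms(2)] unassigned i that] .
  have Suc: "worst_avail (Suc t) = ?g (ARG_MIN ?g d. d \<in> ?D)"
    using avail_Suc_own[OF assms(2,3)] assms(1)
    by (simp add: worst_avail_def choice_def pess_choice_eq_arg_min avail_def)
  have "?g (ARG_MIN ?g d. d \<in> ?D) + (card ?D - 1) \<le> worst_avail t"
    unfolding worst_avail_def by (rule worst_rank_arg_min_slice[OF distinct_R avail_subset_R D slices])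
  then show ?thesis unfolding Suc kk .
qed

lemma worst_avail_plus_sum_le:
  assumes "\<not> optimistic j"
  shows "t \<le> length Ord \<Longrightarrow> worst_avail t + (\<Sum>c\<in>{c. (j, c) \<in> set (take t Ord)}. kk n Ord j c - 1) \<le> n ^ p"
proof (induction t)
  case 0
  then show ?case using worst_avail_le by simp
next
  case (Suc t)
  then have t: "t < length Ord" by simp
  have IH: "worst_avail t + (\<Sum>c\<in>{c. (j, c) \<in> set (take t Ord)}. kk n Ord j c - 1) \<le> n ^ p"
    using Suc by simp
  obtain a i where ai: "Ord ! t = (a, i)" by fastforce
  show ?case
  proof (cases "a = j")
    case True
    have "{c. (j, c) \<in> set (take (Suc t) Ord)} = insert i {c. (j, c) \<in> set (take t Ord)}"
      using set_take_Suc_Ord[OF t] ai True by auto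
    moreover have "i \<notin> {c. (j, c) \<in> set (take t Ord)}"
      using nth_Ord_notin_set_take[OF t] ai True by simp
    moreover have "finite {c. (j, c) \<in> set (take t Ord)}"
      by (rule finite_subset[of _ "snd ` set (take t Ord)"]) force+
    ultimately show ?thesis
      using IH worst_avail_Suc_own[OF assms t] ai True by simp
  next
    case False
    then have "{c. (j, c) \<in> set (take (Suc t) Ord)} = {c. (j, c) \<in> set (take t Ord)}"
      using set_take_Suc_Ord[OF t] ai by auto
    then show ?thesis
      using IH worst_avail_Suc_le[OF t] by simp
  qed
qed

lemma Rank_CSAM_pessimistic:
  assumes "\<not> optimistic j"
  shows "Rank (R j) (CSAM n p Ord optimistic R j) + (\<Sum>c<p. kk n Ord j c - 1) \<le> n ^ p"
proof -
  have "{c. (j, c) \<in> set Ord} = {..<p}" using set_Ord agent by auto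
  then have "worst_avail (length Ord) + (\<Sum>c<p. kk n Ord j c - 1) \<le> n ^ p"
    using worst_avail_plus_sum_le[OF assms order_refl] by simp
  moreover have "Rank (R j) (CSAM n p Ord optimistic R j) \<le> worst_avail (length Ord)"
    using avail_final avail_subset_R Rank_le_worst_rank[OF distinct_R] unfolding worst_avail_def by blast
  ultimately show ?thesis by simp
qed

lemma set_filter_agent: "set (filter (\<lambda>x. fst x = j) Ord) = {j} \<times> {..<p}"
  using set_Ord agent by auto

lemma distinct_Oj: "distinct (Oj Ord j)"
  unfolding Oj_def using set_filter_agent distinct_Ord
  by (auto simp: distinct_map inj_on_def)

lemma set_Oj: "set (Oj Ord j) = {..<p}"
  unfolding Oj_def set_map set_filter_agent by force

lemma length_Oj: "length (Oj Ord j) = p"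
  using distinct_card[OF distinct_Oj] set_Oj by simp

lemma Oj_less: "l < p \<Longrightarrow> Oj Ord j ! l < p"
  using nth_mem[of l "Oj Ord j"] length_Oj set_Oj by auto

lemma bij_betw_Oj: "bij_betw (\<lambda>l. Oj Ord j ! (l - 1)) {1..p} {..<p}"
proof -
  have "bij_betw (\<lambda>l. l - 1) {1..p} {..<p}"
    by (rule bij_betw_byWitness[where f' = Suc]) auto
  moreover have "bij_betw ((!) (Oj Ord j)) {..<p} {..<p}"
    using bij_betw_nth[OF distinct_Oj] length_Oj set_Oj by simp
  ultimately show ?thesis
    using bij_betw_trans by (fastforce simp: comp_def)
qed

lemma round_of_Oj_strict_mono:
  assumes "l < l'" "l' < p"
  shows "round_of (Oj Ord j ! l) < round_of (Oj Ord j ! l')"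
proof -
  let ?F = "filter (\<lambda>x. fst x = j) Ord"
  have len: "length ?F = p" using length_Oj by (simp add: Oj_def)
  have F: "?F ! m = (j, Oj Ord j ! m)" if "m < p" for m
  proof -
    have "?F ! m \<in> set ?F" by (rule nth_mem) (simp add: len that)
    then have "?F ! m \<in> {j} \<times> {..<p}" by (simp only: set_filter_agent)
    then show ?thesis using that len by (auto simp: Oj_def)
  qed
  have "sorted_wrt (\<lambda>x y. pos Ord x < pos Ord y) Ord"
    unfolding sorted_wrt_iff_nth_less using pos_nth[OF distinct_Ord] by simp
  then have "sorted_wrt (\<lambda>x y. pos Ord x < pos Ord y) ?F"
    by (rule sorted_wrt_filter)
  then have "pos Ord (?F ! l) < pos Ord (?F ! l')"
    unfolding sorted_wrt_iff_nth_less using assms len by simp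
  then show ?thesis
    unfolding round_of_def using F assms by simp
qed

lemma KK_spec: "1 \<le> KK p Ord j \<and> KK p Ord j \<le> p \<and> (\<forall>l. KK p Ord j < l \<and> l \<le> p \<longrightarrow>
    \<not> (\<exists>t. round_of (Oj Ord j ! (KK p Ord j - 1)) < t \<and> t < round_of (Oj Ord j ! (l - 1)) \<and>
           snd (Ord ! t) = Oj Ord j ! (l - 1)))"
  unfolding KK_def round_of_def by (rule LeastI[of _ p]) (use p_pos in auto)

lemma KK_pos: "1 \<le> KK p Ord j" and KK_le: "KK p Ord j \<le> p"
  using KK_spec by auto

definition pivot_round :: nat where
  "pivot_round = round_of (Oj Ord j ! (KK p Ord j - 1))"

lemma pivot_round_less: "pivot_round < length Ord"
  and nth_pivot_round: "Ord ! pivot_round = (j, Oj Ord j ! (KK p Ord j - 1))"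
proof -
  have "Oj Ord j ! (KK p Ord j - 1) < p"
    using Oj_less KK_pos KK_le by simp
  then show "pivot_round < length Ord" "Ord ! pivot_round = (j, Oj Ord j ! (KK p Ord j - 1))"
    unfolding pivot_round_def by (simp_all add: round_of_less nth_round_of)
qed

lemma pivot_round_le_round_of:
  assumes "KK p Ord j \<le> l" "l \<le> p"
  shows "pivot_round \<le> round_of (Oj Ord j ! (l - 1))"
proof (cases "l = KK p Ord j")
  case False
  then have "KK p Ord j - 1 < l - 1" "l - 1 < p" using assms KK_pos by linarith+
  then show ?thesis
    using round_of_Oj_strict_mono unfolding pivot_round_def by (simp add: less_imp_le)
qed (simp add: pivot_round_def)

lemma no_pick_after_pivot:
  assumes "pivot_round < m" "m < round_of c" "c < p"
  shows "snd (Ord ! m) \<noteq> c"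
proof -
  let ?K = "KK p Ord j"
  obtain l where l: "l < p" "Oj Ord j ! l = c"
    using assms(3) set_Oj length_Oj by (metis in_set_conv_nth lessThan_iff)
  have "?K - 1 < l"
  proof (rule ccontr)
    assume "\<not> ?K - 1 < l"
    then have "l = ?K - 1 \<or> (l < ?K - 1 \<and> ?K - 1 < p)" using KK_pos KK_le by linarith
    then have "round_of c \<le> pivot_round"
      using round_of_Oj_strict_mono[of l "?K - 1"] l(2) unfolding pivot_round_def by auto
    then show False using assms(1,2) by simp
  qed
  then have "?K < Suc l" "Suc l \<le> p" using l(1) by auto
  then show ?thesis
    using KK_spec assms(1,2) l(2) unfolding pivot_round_def by fastforce
qed

definition top_bundle :: "nat list" where
  "top_bundle = hd (filter (\<lambda>b. b \<in> avail pivot_round) (R j))"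

lemma top_bundle_mem: "top_bundle \<in> avail pivot_round"
proof -
  obtain b where "b \<in> avail pivot_round"
    using avail_nonempty pivot_round_less by fastforce
  moreover have "b \<in> set (R j)" using calculation avail_subset_R by blast
  ultimately show ?thesis
    unfolding top_bundle_def using hd_filter_mem[of b "R j" "\<lambda>b. b \<in> avail pivot_round"] by blast
qed

lemma opt_choice_top_bundle:
  assumes "pivot_round \<le> t" "t \<le> length Ord" "top_bundle \<in> avail t"
  shows "opt_choice n p (R j) (round_state t) j i = top_bundle ! i"
proof -
  have "avail t \<subseteq> avail pivot_round" using avail_antimono assms(1,2) .
  moreover have "filter (\<lambda>b. b \<in> avail pivot_round) (R j) \<noteq> []"
    using top_bundle_mem avail_subset_R by (auto simp: filter_empty_conv)
  ultimately have "hd (filter (\<lambda>b. b \<in> avail t) (R j)) = top_bundle"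
    using hd_filter_mono[of "\<lambda>b. b \<in> avail t" "\<lambda>b. b \<in> avail pivot_round" "R j"] assms(3)
    unfolding top_bundle_def by blast
  then show ?thesis by (simp add: opt_choice_def avail_def)
qed

lemma top_bundle_stays:
  assumes "optimistic j"
  shows "pivot_round \<le> t \<Longrightarrow> t \<le> length Ord \<Longrightarrow> top_bundle \<in> avail t"
proof (induction t rule: dec_induct)
  case base
  then show ?case using top_bundle_mem by simp
next
  case (step m)
  then have m: "m < length Ord" and IH: "top_bundle \<in> avail m" by simp_all
  obtain a i where ai: "Ord ! m = (a, i)" by fastforce
  have i: "i < p" using nth_Ord_less(2)[OF m ai] .
  show ?case
  proof (cases "a = j")
    case True
    then show ?thesis
      using avail_Suc_own[OF m] ai IH opt_choice_top_bundle[OF step(1) _ IH] m assms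
      by (simp add: choice_def)
  next
    case False
    have "round_state m j i \<noteq> None"
    proof
      assume unassigned: "round_state m j i = None"
      have "m \<noteq> round_of i" using nth_round_of[OF i] ai False by auto
      then have "m < round_of i"
        using assigned_iff_round_of_less[OF less_imp_le[OF m] i] unassigned by simp
      moreover have "pivot_round \<noteq> m" using nth_pivot_round ai False by auto
      ultimately show False
        using no_pick_after_pivot[of m i] step(1) ai i by simp
    qed
    then show ?thesis using avail_Suc_other[OF m ai False] IH by simp
  qed
qed

lemma CSAM_eq_top_bundle: "optimistic j \<Longrightarrow> CSAM n p Ord optimistic R j = top_bundle"
  using top_bundle_stays[of "length Ord"] pivot_round_less avail_final by simp

lemma Rank_CSAM_optimistic:
  "optimistic j \<Longrightarrow> Rank (R j) (CSAM n p Ord optimistic R j) + card (avail pivot_round) \<le> n ^ p + 1"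
  using Rank_hd_filter_plus_card[OF distinct_R avail_subset_R top_bundle_mem] CSAM_eq_top_bundle
  by (simp add: top_bundle_def length_R)

lemma picked_before_pivot_round_iff:
  assumes "c < p" "pivot_round \<le> round_of c"
  shows "(a, c) \<in> set (take pivot_round Ord) \<longleftrightarrow> (a, c) \<in> set (take (round_of c) Ord)"
proof
  assume "(a, c) \<in> set (take (round_of c) Ord)"
  then have ac: "(a, c) \<in> set Ord" "pos Ord (a, c) < round_of c"
    by (simp_all add: mem_set_take_Ord)
  have "pos Ord (a, c) \<noteq> pivot_round"
  proof
    assume pivot: "pos Ord (a, c) = pivot_round"
    then have "Ord ! pivot_round = (a, c)" using nth_pos[OF ac(1)] by simp
    then have "round_of c = pivot_round"
      using nth_pivot_round round_of_eqI[OF pivot_round_less] by auto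
    then show False using ac(2) pivot by simp
  qed
  moreover have "\<not> pivot_round < pos Ord (a, c)"
    using no_pick_after_pivot[OF _ ac(2) assms(1)] nth_pos[OF ac(1)] by auto
  ultimately show "(a, c) \<in> set (take pivot_round Ord)"
    using ac(1) by (simp add: mem_set_take_Ord)
qed (use assms(2) in \<open>auto simp: mem_set_take_Ord\<close>)

lemma card_avail_entries_pivot_round:
  assumes "c < p" "pivot_round \<le> round_of c"
  shows "card (avail_entries n (round_state pivot_round) j c) = kk n Ord j c"
proof -
  have "round_state pivot_round j c = None"
    using assigned_iff_round_of_less[OF less_imp_le[OF pivot_round_less] assms(1)] assms(2) by simp
  then have "avail_entries n (round_state pivot_round) j c = avail_items n (round_state pivot_round) c"
    by (simp add: avail_entries_def)
  moreover have "{a. (a, c) \<in> set (take pivot_round Ord)} = {a. (a, c) \<in> set (take (round_of c) Ord)}"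
    using picked_before_pivot_round_iff[OF assms] by blast
  ultimately show ?thesis
    unfolding kk_eq_card_avail_items[OF assms(1)]
    using card_avail_items[OF consistent_round_state] pivot_round_less round_of_less[OF assms(1)]
    by simp
qed

lemma prod_kk_le_card_avail_pivot_round:
  "(\<Prod>l\<in>{KK p Ord j..p}. int (kk n Ord j (Oj Ord j ! (l - 1)))) \<le> int (card (avail pivot_round))"
proof -
  let ?K = "KK p Ord j" and ?E = "avail_entries n (round_state pivot_round) j"
  let ?C = "(\<lambda>l. Oj Ord j ! (l - 1)) ` {?K..p}"
  have C: "?C \<subseteq> {..<p}" using bij_betw_Oj KK_spec by (auto simp: bij_betw_def)
  have "inj_on (\<lambda>l. Oj Ord j ! (l - 1)) {?K..p}"
    using bij_betw_imp_inj_on[OF bij_betw_Oj] KK_spec by (auto intro: inj_on_subset)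
  then have "(\<Prod>l\<in>{?K..p}. int (kk n Ord j (Oj Ord j ! (l - 1)))) = (\<Prod>c\<in>?C. int (kk n Ord j c))"
    by (simp add: prod.reindex)
  also have "\<dots> = (\<Prod>c\<in>?C. int (card (?E c)))"
    using card_avail_entries_pivot_round C pivot_round_le_round_of by (auto intro!: prod.cong)
  also have "\<dots> \<le> (\<Prod>c<p. int (card (?E c)))"
  proof (rule prod_mono2[OF _ C])
    fix c assume "c \<in> {..<p} - ?C"
    have "finite (?E c)" by (simp add: avail_entries_def finite_avail_items split: option.split)
    then show "1 \<le> int (card (?E c))"
      using avail_entries_nonempty[OF consistent_round_state set_take_Ord_subset agent] pivot_round_less
      by (simp add: Suc_le_eq card_gt_0_iff)
  qed simp_all
  also have "\<dots> = int (card (avail pivot_round))"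
    using avail_eq_prod_lists pivot_round_less by (simp add: card_prod_lists)
  finally show ?thesis .
qed

end

theorem proposition1:
  fixes n p :: nat and Ord :: "(nat \<times> nat) list" and optimistic :: "nat \<Rightarrow> bool"
    and R :: "nat \<Rightarrow> nat list list" and j :: nat
  assumes "1 \<le> p"
    and "is_order n p Ord"
    and "\<forall>a<n. is_linear_order n p (R a)"
    and "j < n"
  shows "(optimistic j \<longrightarrow>
            int (Rank (R j) (CSAM n p Ord optimistic R j))
              \<le> int n ^ p + 1 - (\<Prod>l\<in>{KK p Ord j..p}. int (kk n Ord j (Oj Ord j ! (l - 1)))))
       \<and> (\<not> optimistic j \<longrightarrow>
            int (Rank (R j) (CSAM n p Ord optimistic R j))
              \<le> int n ^ p - (\<Sum>l\<in>{1..p}. int (kk n Ord j (Oj Ord j ! (l - 1))) - 1))"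
proof -
  interpret csam n p Ord optimistic R j
    using assms by unfold_locales
  have "(\<Sum>l\<in>{1..p}. int (kk n Ord j (Oj Ord j ! (l - 1))) - 1) = (\<Sum>c<p. int (kk n Ord j c) - 1)"
    by (rule sum.reindex_bij_betw[OF bij_betw_Oj])
  also have "\<dots> = int (\<Sum>c<p. kk n Ord j c - 1)"
    using kk_pos by (simp add: of_nat_diff Suc_le_eq)
  finally have sum: "(\<Sum>l\<in>{1..p}. int (kk n Ord j (Oj Ord j ! (l - 1))) - 1) = int (\<Sum>c<p. kk n Ord j c - 1)" .
  show ?thesis
    unfolding sum of_nat_power[symmetric]
  proof (intro conjI impI)
    assume "optimistic j"
    then show "int (Rank (R j) (CSAM n p Ord optimistic R j))
        \<le> int (n ^ p) + 1 - (\<Prod>l\<in>{KK p Ord j..p}. int (kk n Ord j (Oj Ord j ! (l - 1))))"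
      using Rank_CSAM_optimistic prod_kk_le_card_avail_pivot_round by linarith
  next
    assume "\<not> optimistic j"
    then show "int (Rank (R j) (CSAM n p Ord optimistic R j)) \<le> int (n ^ p) - int (\<Sum>c<p. kk n Ord j c - 1)"
      using Rank_CSAM_pessimistic by linarith
  qed
qed

end
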